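(* Let $P\subset\mathbb{R}^d$ be a full-dimensional lattice polytope with codegree $a$. Then $P$ is nearly Gorenstein if and only if \[(C_P\cap\mathbb{Z}^{d+1})\setminus\{0\} \subseteq \big(\mathrm{int}(C_P)\cap\mathbb{Z}^{d+1}\big) + \big(\mathrm{ant}(C_P)\cap \mathbb{Z}^{d+1}\big).\] In particular, if $P$ is nearly Gorenstein, then \[P\cap\mathbb{Z}^d = \big(\mathrm{int}(C_P)_a\cap\mathbb{Z}^d\big) + \big(\mathrm{ant}(C_P)_{1-a}\cap\mathbb{Z}^d\big).\] The converse of the last statement also holds if $P$ has the integer decomposition property.
   Context: $\mathbf{k}$ is an infinite field. A lattice polytope $P\subset\mathbb{R}^d$ (vertices in $\mathbb{Z}^d$, full-dimensional) has facet presentation $P=\{x\in\mathbb{R}^d : n_F(x)\ge -h_F \text{ for all facets } F\}$, where each $n_F\in(\mathbb{Z}^d)^*$ is the primitive inner normal vector and $h_F\in\mathbb{Z}$. Define $C_P=\{(x,k)\in\mathbb{R}^{d+1}: n_F(x)\ge -kh_F \ \forall F\}$, $\mathrm{int}(C_P)=\{(x,k): n_F(x)> -kh_F\ \forall F\}$, and $\mathrm{ant}(C_P)=\{(x,k): n_F(x)\ge -kh_F-1\ \forall F\}$. For $X\subseteq\mathbb{R}^{d+1}$ and $k\in\mathbb{Z}$, $X_k=\{x\in\mathbb{R}^d: (x,k)\in X\}$. The Ehrhart ring is $A(P)=\mathbf{k}[\mathbf{t}^x s^k : k\in\mathbb{N},\ x\in kP\cap\mathbb{Z}^d]$, graded by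 $\deg(\mathbf{t}^xs^k)=k$, with graded maximal ideal $\mathbf{m}$ and canonical module $\omega$. The trace of $\omega$ is $\mathrm{tr}(\omega)=\sum_{\phi\in\mathrm{Hom}(\omega,A(P))}\phi(\omega)$; $P$ is nearly Gorenstein if $\mathbf{m}\subseteq \mathrm{tr}(\omega)$. The codegree of $P$ is $a=\min\{k\in\mathbb{Z}_{\ge1}: \mathrm{int}(kP)\cap\mathbb{Z}^d\neq\varnothing\}$. $P$ has the integer decomposition property (IDP) if for every positive integer $k$ every $x\in kP\cap\mathbb{Z}^d$ is a sum of $k$ lattice points of $P$. *)

theory Defs
  imports "HOL-Analysis.Analysis" "HOL-Library.Poly_Mapping" "HOL-Library.Product_Plus"
begin

definition lat :: "int^'d \<Rightarrow> real^'d" where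
  "lat v = (\<chi> i. of_int (v $ i))"

definition lattice_polytope :: "(real^'d) set \<Rightarrow> bool" where
  "lattice_polytope P \<longleftrightarrow> (\<exists>V. finite V \<and> P = convex hull (lat ` V))"

definition full_dimensional :: "(real^'d) set \<Rightarrow> bool" where
  "full_dimensional P \<longleftrightarrow> aff_dim P = int CARD('d)"

definition primitive :: "int^'d \<Rightarrow> bool" where
  "primitive n \<longleftrightarrow> (\<forall>m::int. (\<forall>i. m dvd n $ i) \<longrightarrow> \<bar>m\<bar> = 1)"

definition facet_normal :: "(real^'d) set \<Rightarrow> (real^'d) set \<Rightarrow> int^'d \<Rightarrow> int \<Rightarrow> bool" where
  "facet_normal P F n h \<longleftrightarrow> F facet_of P \<and> primitive n \<and>
     (\<forall>x\<in>P. lat n \<bullet> x \<ge> - of_int h) \<and> F = {x\<in>P. lat n \<bullet> x = - of_int h}"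

definition cone_P :: "(real^'d) set \<Rightarrow> ((real^'d) \<times> real) set" where
  "cone_P P = {(x,k). \<forall>F n h. facet_normal P F n h \<longrightarrow> lat n \<bullet> x \<ge> - k * of_int h}"

definition int_cone_P :: "(real^'d) set \<Rightarrow> ((real^'d) \<times> real) set" where
  "int_cone_P P = {(x,k). \<forall>F n h. facet_normal P F n h \<longrightarrow> lat n \<bullet> x > - k * of_int h}"

definition ant_cone_P :: "(real^'d) set \<Rightarrow> ((real^'d) \<times> real) set" where
  "ant_cone_P P = {(x,k). \<forall>F n h. facet_normal P F n h \<longrightarrow> lat n \<bullet> x \<ge> - k * of_int h - 1}"

definition lat_pts :: "((real^'d) \<times> real) set \<Rightarrow> ((int^'d) \<times> int) set" where
  "lat_pts X = {(v,k). (lat v, of_int k) \<in> X}"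

definition slice_lat :: "((real^'d) \<times> real) set \<Rightarrow> int \<Rightarrow> (int^'d) set" where
  "slice_lat X k = {v. (lat v, of_int k) \<in> X}"

definition codegree :: "(real^'d) set \<Rightarrow> nat" where
  "codegree P = (LEAST k::nat. k \<ge> 1 \<and> (\<exists>v. lat v \<in> interior ((\<lambda>x. real k *\<^sub>R x) ` P)))"

definition IDP :: "(real^'d) set \<Rightarrow> bool" where
  "IDP P \<longleftrightarrow> (\<forall>k::nat. k \<ge> 1 \<longrightarrow> (\<forall>v. lat v \<in> (\<lambda>x. real k *\<^sub>R x) ` P \<longrightarrow>
      (\<exists>u :: nat \<Rightarrow> int^'d. (\<forall>i<k. lat (u i) \<in> P) \<and> v = (\<Sum>i<k. u i))))"

text \<open>Laurent polynomials in t_1..t_d, s over 'k: finitely supported functions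
  Z^d \<times> Z \<Rightarrow> 'k with convolution product; the monomial t^x s^k is Poly_Mapping.single (x,k) 1.\<close>
type_synonym ('d,'k) laurent = "((int^'d) \<times> int) \<Rightarrow>\<^sub>0 'k"

text \<open>A(P) = k[t^x s^k : k \<in> N, x \<in> kP \<inter> Z^d]; since these exponents form a monoid,
  this is the k-span of these monomials.\<close>
definition ehrhart_ring :: "'k itself \<Rightarrow> (real^'d) set \<Rightarrow> ('d,'k::field) laurent set" where
  "ehrhart_ring _ P = {f. Poly_Mapping.keys f \<subseteq> {(v,k). k \<ge> 0 \<and> lat v \<in> (\<lambda>x. real_of_int k *\<^sub>R x) ` P}}"

definition max_ideal :: "'k itself \<Rightarrow> (real^'d) set \<Rightarrow> ('d,'k::field) laurent set" where
  "max_ideal T P = {f \<in> ehrhart_ring T P. \<forall>(v,k)\<in>Poly_Mapping.keys f. k > 0}"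

text \<open>Canonical module of the normal Ehrhart ring (Danilov-Stanley): the ideal of A(P)
  spanned by the monomials of int(C_P) \<inter> Z^{d+1}.\<close>
definition canonical_module :: "'k itself \<Rightarrow> (real^'d) set \<Rightarrow> ('d,'k::field) laurent set" where
  "canonical_module _ P = {f. Poly_Mapping.keys f \<subseteq> lat_pts (int_cone_P P)}"

text \<open>Hom_{A}(\<omega>, A): A-linear maps from \<omega> to A (values outside \<omega> irrelevant).\<close>
definition hom_omega :: "'k itself \<Rightarrow> (real^'d) set \<Rightarrow> (('d,'k::field) laurent \<Rightarrow> ('d,'k) laurent) set" where
  "hom_omega T P = {\<phi>. (\<forall>w\<in>canonical_module T P. \<phi> w \<in> ehrhart_ring T P) \<and>
      (\<forall>w1\<in>canonical_module T P. \<forall>w2\<in>canonical_module T P. \<phi> (w1 + w2) = \<phi> w1 + \<phi> w2) \<and>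
      (\<forall>a\<in>ehrhart_ring T P. \<forall>w\<in>canonical_module T P. \<phi> (a * w) = a * \<phi> w)}"

definition trace_omega :: "'k itself \<Rightarrow> (real^'d) set \<Rightarrow> ('d,'k::field) laurent set" where
  "trace_omega T P = {(\<Sum>i<(N::nat). \<phi> i (w i)) | N \<phi> w.
      \<forall>i<N. \<phi> i \<in> hom_omega T P \<and> w i \<in> canonical_module T P}"

definition nearly_gorenstein :: "'k::field itself \<Rightarrow> (real^'d) set \<Rightarrow> bool" where
  "nearly_gorenstein T P \<longleftrightarrow> max_ideal T P \<subseteq> trace_omega T P"

end

(* The three cones are cut out by the integer-valued facet forms n_F(x) + k h_F, which are
   >= 0 on C_P, >= 1 on int(C_P) and >= -1 on ant(C_P). Since the canonical module and the
   Ehrhart ring are spanned by monomials, a homomorphism omega -> A(P) maps t^p to a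
   combination of monomials t^(p+q) with q + int(C_P) contained in C_P, and multiplication
   by t^q with q in ant(C_P) is such a homomorphism; so tr(omega) is spanned by the monomials
   of int(C_P) + ant(C_P). The key geometric step is that q + int(C_P) contained in C_P forces
   q in ant(C_P): over every facet there is an interior lattice point at height exactly 1,
   obtained from a Bezout relation for the primitive normal plus a large multiple of the sum
   of the lattice generators of P on the facet. The degree-one statements follow by comparing
   degrees with the codegree, and IDP reduces every degree to degree one. *)

theory Submission
  imports Defs
begin

section \<open>Integer linear algebra\<close>

lemma lat_diff: "lat (u - v) = lat u - lat v"
  by (simp add: lat_def vec_eq_iff)

lemma lat_uminus: "lat (- v) = - lat v"
  by (simp add: lat_def vec_eq_iff)

lemma lat_smult: "lat (c *s v) = of_int c *\<^sub>R lat v"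
  by (simp add: lat_def vec_eq_iff)

lemma lat_eq_0_iff [simp]: "lat v = 0 \<longleftrightarrow> v = 0"
  by (simp add: lat_def vec_eq_iff)

lemma lat_0 [simp]: "lat 0 = 0"
  by simp

lemma lat_component_Ints: "lat v $ i \<in> \<int>"
  by (simp add: lat_def)

lemma inner_lat: "lat n \<bullet> lat v = of_int (\<Sum>i\<in>UNIV. n $ i * v $ i)"
  by (simp add: lat_def inner_vec_def)

lemma det_Ints:
  fixes A :: "real^'n^'n"
  assumes "\<And>i j. A $ i $ j \<in> \<int>"
  shows "det A \<in> \<int>"
  unfolding det_def using assms by (intro Ints_sum Ints_mult Ints_prod Ints_of_int) auto

lemma det_neq_0_if_rows_span:
  fixes M :: "real^'n^'n"
  assumes "span (range (\<lambda>i. M $ i)) = UNIV"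
  shows "det M \<noteq> 0"
proof -
  have "y = 0" if "M *v y = 0" for y
  proof -
    have "range (\<lambda>i. M $ i) \<subseteq> {x. x \<bullet> y = 0}"
      using that by (auto simp: vec_eq_iff matrix_vector_mult_def inner_vec_def)
    then have "span (range (\<lambda>i. M $ i)) \<subseteq> {x. x \<bullet> y = 0}"
      by (intro span_minimal) (auto intro: subspace_hyperplane2)
    then have "y \<bullet> y = 0" using assms by blast
    then show "y = 0" by simp
  qed
  then have "inj ((*v) M)"
    by (intro linear_inj_on_iff_eq_0[THEN iffD2]) (auto simp: matrix_vector_mul_linear)
  then show ?thesis
    using det_nz_iff_inj[OF matrix_vector_mul_linear[of M]] by simp
qed

text \<open>By Cramer's rule, scaling the solution of an integer system by the determinant
  makes it integral.\<close>
lemma integer_system_scaled_solution: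
  fixes M :: "real^'n^'n" and t :: "real^'n"
  assumes M: "\<And>i j. M $ i $ j \<in> \<int>" and t: "\<And>i. t $ i \<in> \<int>" and det: "det M \<noteq> 0"
  shows "\<exists>n. M *v lat n = det M *\<^sub>R t"
proof -
  define D where "D k = det (\<chi> i j. if j = k then t $ i else M $ i $ j)" for k
  have D_Ints: "D k \<in> \<int>" for k
    unfolding D_def by (rule det_Ints) (simp add: M t)
  define n where "n = (\<chi> k. \<lfloor>D k\<rfloor>)"
  have "lat n = det M *\<^sub>R (\<chi> k. D k / det M)"
    using D_Ints det by (auto simp: lat_def n_def vec_eq_iff elim!: Ints_cases)
  moreover have "M *v (\<chi> k. D k / det M) = t"
    using cramer[OF det] by (simp add: D_def)
  ultimately show ?thesis
    by (metis matrix_vector_mult_scaleR)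
qed

lemma primitive_nonzero: "primitive n \<Longrightarrow> n \<noteq> 0"
  unfolding primitive_def by (force dest: spec[of _ 2])

lemma primitive_uminus: "primitive n \<Longrightarrow> primitive (- n)"
  unfolding primitive_def by simp

lemma primitive_factor:
  fixes n :: "int^'d"
  assumes "n \<noteq> 0"
  obtains m c where "primitive m" "c \<noteq> 0" "n = c *s m"
proof
  define c where "c = Gcd (range (\<lambda>i. n $ i))"
  have c_dvd: "c dvd n $ i" for i
    unfolding c_def by (rule Gcd_dvd) auto
  show "c \<noteq> 0"
    using assms by (auto simp: c_def vec_eq_iff)
  show n_eq: "n = c *s (\<chi> i. n $ i div c)"
    using c_dvd by (simp add: vec_eq_iff)
  show "primitive (\<chi> i. n $ i div c)"
    unfolding primitive_def
  proof (intro allI impI)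
    fix m :: int
    assume "\<forall>i. m dvd (\<chi> i. n $ i div c) $ i"
    then have "m * c dvd n $ i" for i
      by (metis n_eq mult.commute mult_dvd_mono dvd_refl vector_smult_component)
    then have "m * c dvd c"
      unfolding c_def by (intro Gcd_greatest) auto
    then show "\<bar>m\<bar> = 1"
      using \<open>c \<noteq> 0\<close> by simp
  qed
qed

lemma sum_bezout_int:
  fixes f :: "'a \<Rightarrow> int"
  assumes "finite I"
  shows "\<exists>c. (\<Sum>i\<in>I. c i * f i) = Gcd (f ` I)"
  using assms
proof (induction I rule: finite_induct)
  case empty
  show ?case by simp
next
  case (insert j I)
  obtain c where c: "(\<Sum>i\<in>I. c i * f i) = Gcd (f ` I)"
    using insert.IH by blast
  obtain u v where uv: "u * f j + v * Gcd (f ` I) = gcd (f j) (Gcd (f ` I))"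
    using bezout_int by blast
  define c' where "c' i = (if i = j then u else v * c i)" for i
  have "(\<Sum>i\<in>insert j I. c' i * f i) = u * f j + v * (\<Sum>i\<in>I. c i * f i)"
    using insert.hyps by (auto simp: c'_def sum_distrib_left mult.assoc intro!: sum.cong)
  then show ?case
    using uv c by (auto intro: exI[of _ c'])
qed

lemma primitive_bezout:
  fixes n :: "int^'d"
  assumes "primitive n"
  obtains x where "(\<Sum>i\<in>UNIV. n $ i * x $ i) = 1"
proof -
  obtain c where c: "(\<Sum>i\<in>UNIV. c i * n $ i) = Gcd (range (\<lambda>i. n $ i))"
    using sum_bezout_int[of UNIV "\<lambda>i. n $ i"] by auto
  have "\<bar>Gcd (range (\<lambda>i. n $ i))\<bar> = 1"
    using assms unfolding primitive_def by (metis Gcd_dvd rangeI)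
  then have "(\<Sum>i\<in>UNIV. n $ i * (\<chi> i. c i) $ i) = 1"
    using c by (simp add: mult.commute)
  then show ?thesis by (rule that)
qed

lemma exists_integer_dual_vector:
  fixes B :: "(real^'d) set"
  assumes indep: "independent B" and span_B: "span B = UNIV"
    and B_Ints: "\<And>b i. b \<in> B \<Longrightarrow> b $ i \<in> \<int>" and e: "e \<in> B"
  obtains n where "n \<noteq> 0" "\<forall>b\<in>B - {e}. b \<bullet> lat n = 0"
proof -
  have "card B = CARD('d)"
    using basis_card_eq_dim[of B UNIV] indep span_B by simp
  then obtain g where g: "bij_betw g (UNIV :: 'd set) B"
    using finite_same_card_bij[of "UNIV :: 'd set" B] finiteI_independent[OF indep] by auto
  define M :: "real^'d^'d" where "M = (\<chi> i. g i)"
  have rows: "range (\<lambda>i. M $ i) = B"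
    using g by (simp add: M_def bij_betw_def)
  then have M_Ints: "M $ i $ j \<in> \<int>" for i j
    using B_Ints by blast
  have "det M \<noteq> 0"
    using span_B rows by (intro det_neq_0_if_rows_span) simp
  then obtain n where n: "M *v lat n = det M *\<^sub>R (\<chi> i. if g i = e then 1 else 0)"
    using integer_system_scaled_solution[OF M_Ints] by (fastforce simp: Ints_0)
  have g_n: "g i \<bullet> lat n = (if g i = e then det M else 0)" for i
    using n by (auto simp: vec_eq_iff matrix_vector_mult_def inner_vec_def M_def)
  have g_onto: "\<exists>i. g i = b" if "b \<in> B" for b
    using g that by (metis bij_betw_imp_surj_on imageE)
  show ?thesis
  proof (rule that)
    obtain i where "g i = e"
      using g_onto e by blast
    then have "e \<bullet> lat n = det M"
      using g_n[of i] by simp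
    with \<open>det M \<noteq> 0\<close> show "n \<noteq> 0"
      by auto
  next
    show "\<forall>b\<in>B - {e}. b \<bullet> lat n = 0"
    proof
      fix b
      assume "b \<in> B - {e}"
      then obtain j where "g j = b" "b \<noteq> e"
        using g_onto by blast
      then show "b \<bullet> lat n = 0"
        using g_n[of j] by simp
    qed
  qed
qed

text \<open>Extend a basis of \<open>span W\<close> by standard unit vectors; the integral dual vector of an
  added unit vector is orthogonal to \<open>W\<close>.\<close>
lemma exists_primitive_orthogonal:
  fixes W :: "(int^'d) set"
  assumes "span (lat ` W) \<noteq> UNIV"
  obtains n where "primitive n" "\<And>w. w \<in> W \<Longrightarrow> lat n \<bullet> lat w = 0"
proof -
  obtain B0 where B0: "B0 \<subseteq> lat ` W" "independent B0" "lat ` W \<subseteq> span B0"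
    using maximal_independent_subset[of "lat ` W"] by blast
  obtain B where B: "B0 \<subseteq> B" "B \<subseteq> B0 \<union> Basis" "independent B" "B0 \<union> Basis \<subseteq> span B"
    using maximal_independent_subset_extend[of B0 "B0 \<union> Basis"] B0(2) by blast
  have span_B: "span B = UNIV"
    by (metis B(4) span_Basis span_mono span_span subset_UNIV subset_antisym le_sup_iff)
  have "B \<noteq> B0"
    using assms span_B B0(1,3) by (metis span_mono span_span subset_antisym)
  then obtain e where e: "e \<in> B" "e \<notin> B0"
    using B(1) by blast
  have B_Ints: "b $ i \<in> \<int>" if "b \<in> B" for b i
  proof -
    have "b \<in> lat ` W \<or> b \<in> Basis"
      using that B(2) B0(1) by blast
    then show ?thesis
      by (auto simp: lat_component_Ints Basis_vec_def axis_def)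
  qed
  obtain n0 where "n0 \<noteq> 0" and orth: "\<forall>b\<in>B - {e}. b \<bullet> lat n0 = 0"
    by (rule exists_integer_dual_vector[OF B(3) span_B B_Ints e(1)])
  from \<open>n0 \<noteq> 0\<close> obtain n c where n: "primitive n" "c \<noteq> 0" "n0 = c *s n"
    by (rule primitive_factor)
  have "B0 \<subseteq> {x. x \<bullet> lat n0 = 0}"
    using orth B(1) e(2) by blast
  then have "span B0 \<subseteq> {x. x \<bullet> lat n0 = 0}"
    by (intro span_minimal) (auto intro: subspace_hyperplane2)
  then have "lat w \<bullet> lat n0 = 0" if "w \<in> W" for w
    using B0(3) that by auto
  then have "lat w \<bullet> lat n = 0" if "w \<in> W" for w
    using that n by (simp add: lat_smult)
  with n(1) show ?thesis
    by (metis that inner_commute)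
qed

lemma eventually_sequentially_pos_linear:
  fixes c s :: int
  assumes "1 \<le> s"
  shows "eventually (\<lambda>N. 0 < c + int N * s) sequentially"
proof -
  have "0 < c + int N * s" if "nat \<bar>c\<bar> + 1 \<le> N" for N
  proof -
    have "int (nat \<bar>c\<bar> + 1) \<le> int N"
      using that by (simp only: of_nat_le_iff)
    moreover have "int N \<le> int N * s"
      using mult_left_mono[of 1 s "int N"] assms by simp
    ultimately show ?thesis
      by simp
  qed
  then show ?thesis
    unfolding eventually_sequentially by blast
qed

section \<open>Convex geometry\<close>

lemma hyperplane_eq_imp_proportional:
  fixes a c :: "'a::euclidean_space"
  assumes a: "a \<noteq> 0" and eq: "{x. c \<bullet> x = e} = {x. a \<bullet> x = b}"
  obtains \<mu> where "c = \<mu> *\<^sub>R a" "e = \<mu> * b"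
proof -
  define x0 where "x0 = (b / (a \<bullet> a)) *\<^sub>R a"
  have a_x0: "a \<bullet> x0 = b"
    using a by (simp add: x0_def)
  then have c_x0: "c \<bullet> x0 = e"
    using eq by blast
  have c_orth: "c \<bullet> y = 0" if "a \<bullet> y = 0" for y
  proof -
    have "x0 + y \<in> {x. a \<bullet> x = b}"
      using a_x0 that by (simp add: inner_add_right)
    then have "c \<bullet> (x0 + y) = e"
      using eq by blast
    then show ?thesis
      using c_x0 by (simp add: inner_add_right)
  qed
  define \<mu> where "\<mu> = (c \<bullet> a) / (a \<bullet> a)"
  have "a \<bullet> (c - \<mu> *\<^sub>R a) = 0"
    using a by (simp add: \<mu>_def inner_diff_right inner_commute)
  then have "(c - \<mu> *\<^sub>R a) \<bullet> (c - \<mu> *\<^sub>R a) = 0"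
    using c_orth by (simp add: inner_diff_left)
  then have "c = \<mu> *\<^sub>R a"
    by simp
  moreover from this have "e = \<mu> * b"
    using a_x0 c_x0 by simp
  ultimately show ?thesis by (rule that)
qed

lemma affine_hull_eq_hyperplane:
  fixes S :: "'a::euclidean_space set"
  assumes sub: "S \<subseteq> {x. a \<bullet> x = b}" and "a \<noteq> 0" and dim: "aff_dim S = DIM('a) - 1"
  shows "affine hull S = {x. a \<bullet> x = b}"
proof (rule ccontr)
  assume ne: "affine hull S \<noteq> {x. a \<bullet> x = b}"
  have "affine hull S \<subseteq> {x. a \<bullet> x = b}"
    using sub affine_hyperplane by (rule hull_minimal)
  moreover have "affine hull {x. a \<bullet> x = b} = {x. a \<bullet> x = b}"
    by (simp add: affine_hyperplane hull_same)
  ultimately have "affine hull S \<subset> affine hull {x. a \<bullet> x = b}"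
    using ne by blast
  then have "aff_dim S < aff_dim {x. a \<bullet> x = b}"
    by (rule aff_dim_psubset)
  with \<open>a \<noteq> 0\<close> dim show False
    by simp
qed

lemma facet_hyperplanes_proportional:
  fixes S :: "'a::euclidean_space set"
  assumes dim: "aff_dim S = DIM('a)" and F: "F facet_of S"
    and "a \<noteq> 0" "F \<subseteq> {x. a \<bullet> x = b}" and "c \<noteq> 0" "F \<subseteq> {x. c \<bullet> x = e}"
  obtains \<mu> where "c = \<mu> *\<^sub>R a" "e = \<mu> * b"
proof -
  have "aff_dim F = DIM('a) - 1"
    using F dim by (simp add: facet_of_def)
  then have "affine hull F = {x. a \<bullet> x = b}" "affine hull F = {x. c \<bullet> x = e}"
    using assms affine_hull_eq_hyperplane by blast+
  then have "{x. c \<bullet> x = e} = {x. a \<bullet> x = b}"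
    by simp
  with \<open>a \<noteq> 0\<close> show ?thesis
    using hyperplane_eq_imp_proportional that by blast
qed

lemma facet_supporting_halfspaces_proportional:
  fixes S :: "'a::euclidean_space set"
  assumes dim: "aff_dim S = DIM('a)" and F: "F facet_of S"
    and a: "a \<noteq> 0" "S \<subseteq> {x. a \<bullet> x \<le> b}" "F = S \<inter> {x. a \<bullet> x = b}"
    and c: "c \<noteq> 0" "S \<subseteq> {x. c \<bullet> x \<le> e}" "F \<subseteq> {x. c \<bullet> x = e}"
  obtains t where "t > 0" "c = t *\<^sub>R a" "e = t * b"
proof -
  have "F \<subseteq> {x. a \<bullet> x = b}"
    using a(3) by blast
  then obtain \<mu> where \<mu>: "c = \<mu> *\<^sub>R a" "e = \<mu> * b"
    by (rule facet_hyperplanes_proportional[OF dim F a(1) _ c(1,3)])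
  have "\<not> \<mu> < 0"
  proof
    assume "\<mu> < 0"
    have "a \<bullet> x = b" if "x \<in> S" for x
    proof -
      have "c \<bullet> x \<le> e" "a \<bullet> x \<le> b"
        using a(2) c(2) that by blast+
      then have "\<mu> * (a \<bullet> x) \<le> \<mu> * b" "a \<bullet> x \<le> b"
        using \<mu> by simp_all
      with \<open>\<mu> < 0\<close> show ?thesis
        by (smt (verit) mult_le_cancel_left)
    qed
    then have "S \<subseteq> {x. a \<bullet> x = b}"
      by blast
    then have "aff_dim S \<le> aff_dim {x. a \<bullet> x = b}"
      by (rule aff_dim_subset)
    with a(1) dim show False
      by simp
  qed
  moreover have "\<mu> \<noteq> 0"
    using c(1) \<mu>(1) by auto
  ultimately have "\<mu> > 0"
    by linarith
  then show ?thesis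
    using \<mu> by (rule that)
qed

lemma facet_of_subset_eq:
  assumes "convex S" "F facet_of S" "G facet_of S" "F \<subseteq> G"
  shows "F = G"
proof (rule ccontr)
  assume "F \<noteq> G"
  have "F face_of G"
    using assms by (meson face_of_subset facet_of_imp_face_of facet_of_imp_subset)
  then have "aff_dim F < aff_dim G"
    using \<open>F \<noteq> G\<close> assms(3) by (meson face_of_aff_dim_lt face_of_imp_convex facet_of_imp_face_of)
  with assms(2,3) show False
    by (simp add: facet_of_def)
qed

lemma face_of_convex_hull_eq:
  fixes S :: "'a::euclidean_space set"
  assumes "finite S" "F face_of convex hull S"
  shows "F = convex hull (S \<inter> F)"
proof -
  obtain S' where "S' \<subseteq> S" "F = convex hull S'"
    using face_of_convex_hull_subset[OF finite_imp_compact] assms by metis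
  moreover have "convex hull (S \<inter> F) \<subseteq> F"
    using assms(2) by (simp add: face_of_imp_convex hull_minimal)
  ultimately show ?thesis
    by (metis hull_mono hull_subset inf.bounded_iff subset_antisym)
qed

lemma face_of_lattice_hull:
  assumes "finite V" "F face_of convex hull (lat ` V)"
  shows "F = convex hull (lat ` {v \<in> V. lat v \<in> F})"
proof -
  have "lat ` V \<inter> F = lat ` {v \<in> V. lat v \<in> F}"
    by auto
  then show ?thesis
    using face_of_convex_hull_eq[of "lat ` V" F] assms by simp
qed

lemma bounded_ray_eq_0:
  fixes x :: "'a::real_normed_vector"
  assumes "bounded S" and ray: "\<And>t. t \<ge> 0 \<Longrightarrow> p + t *\<^sub>R x \<in> S"
  shows "x = 0"
proof (rule ccontr)
  assume "x \<noteq> 0"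
  obtain B where B: "\<And>y. y \<in> S \<Longrightarrow> norm y \<le> B"
    using assms(1) bounded_iff by blast
  have "norm p \<le> B"
    using B ray[of 0] by simp
  define t where "t = (B + norm p + 1) / norm x"
  have "B + norm p + 1 \<ge> 0"
    using \<open>norm p \<le> B\<close> norm_ge_zero[of p] by linarith
  then have "t \<ge> 0" and "norm (t *\<^sub>R x) = B + norm p + 1"
    using \<open>x \<noteq> 0\<close> by (auto simp: t_def)
  moreover have "norm (t *\<^sub>R x) \<le> norm (p + t *\<^sub>R x) + norm p"
    using norm_triangle_ineq4[of "p + t *\<^sub>R x" p] by simp
  ultimately show False
    using B ray by (smt (verit))
qed

lemma full_dim_polyhedron_facet_halfspaces:
  fixes S :: "'a::euclidean_space set"
  assumes "polyhedron S" and "aff_dim S = DIM('a)"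
  obtains H where "S = {x. \<forall>(a, b)\<in>H. a \<bullet> x \<le> b}"
    "\<And>a b. (a, b) \<in> H \<Longrightarrow> a \<noteq> 0 \<and> (S \<inter> {x. a \<bullet> x = b}) facet_of S"
proof -
  obtain I where I: "finite I" "S = affine hull S \<inter> \<Inter>I"
    and "\<And>h. h \<in> I \<Longrightarrow> \<exists>a b. a \<noteq> 0 \<and> h = {x. a \<bullet> x \<le> b}"
    and minimal: "\<And>I'. I' \<subset> I \<Longrightarrow> S \<subset> affine hull S \<inter> \<Inter>I'"
    using assms(1) by (simp add: polyhedron_Int_affine_minimal) meson
  then obtain a b where ab: "\<And>h. h \<in> I \<Longrightarrow> a h \<noteq> 0 \<and> h = {x. a h \<bullet> x \<le> b h}"
    by metis
  have mem_h: "x \<in> h \<longleftrightarrow> a h \<bullet> x \<le> b h" if "h \<in> I" for h x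
    using ab[OF that] by (metis (no_types, lifting) mem_Collect_eq)
  have "affine hull S = UNIV"
    using assms(2) aff_dim_eq_full by blast
  then have S_eq: "S = {x. \<forall>(a, b)\<in>(\<lambda>h. (a h, b h)) ` I. a \<bullet> x \<le> b}"
    using I(2) mem_h by auto
  have facet: "a h \<noteq> 0 \<and> (S \<inter> {x. a h \<bullet> x = b h}) facet_of S" if "h \<in> I" for h
  proof
    show "a h \<noteq> 0"
      using ab[OF that] by (rule conjunct1)
    show "(S \<inter> {x. a h \<bullet> x = b h}) facet_of S"
      using facet_of_polyhedron_explicit[OF I ab minimal] that by blast
  qed
  show ?thesis
  proof (rule that)
    show "S = {x. \<forall>(a, b)\<in>(\<lambda>h. (a h, b h)) ` I. a \<bullet> x \<le> b}"
      by (fact S_eq)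
    fix a' b'
    assume "(a', b') \<in> (\<lambda>h. (a h, b h)) ` I"
    then obtain h where "h \<in> I" "a' = a h" "b' = b h"
      by auto
    then show "a' \<noteq> 0 \<and> (S \<inter> {x. a' \<bullet> x = b'}) facet_of S"
      using facet by simp
  qed
qed

lemma in_scaleR_image_iff:
  fixes x :: "'a::real_vector"
  assumes "c \<noteq> 0"
  shows "x \<in> (\<lambda>y. c *\<^sub>R y) ` S \<longleftrightarrow> inverse c *\<^sub>R x \<in> S"
  using assms by (force simp: image_iff)

section \<open>Facet forms and the lattice points of the cones\<close>

text \<open>For a facet normal \<open>(n, h)\<close> this is the integer \<open>n(x) + k h\<close>: \<open>C\<^sub>P\<close>, \<open>int(C\<^sub>P)\<close> and
  \<open>ant(C\<^sub>P)\<close> are where it is \<open>\<ge> 0\<close>, \<open>\<ge> 1\<close> and \<open>\<ge> -1\<close> for all facets.\<close>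
definition facet_form :: "int^'d \<Rightarrow> int \<Rightarrow> (int^'d) \<times> int \<Rightarrow> int" where
  "facet_form n h z = (\<Sum>i\<in>UNIV. n $ i * fst z $ i) + snd z * h"

lemma of_int_facet_form:
  "of_int (facet_form n h (v, k)) = lat n \<bullet> lat v + of_int k * of_int h"
  by (simp add: facet_form_def inner_lat)

lemma facet_form_add: "facet_form n h (z + w) = facet_form n h z + facet_form n h w"
  by (simp add: facet_form_def sum.distrib algebra_simps)

lemma facet_form_0 [simp]: "facet_form n h 0 = 0"
  by (simp add: facet_form_def)

lemma facet_form_sum: "facet_form n h (sum f S) = (\<Sum>x\<in>S. facet_form n h (f x))"
  by (induction S rule: infinite_finite_induct) (auto simp: facet_form_add)

lemma facet_form_smult: "facet_form n h (c *s v, c * k) = c * facet_form n h (v, k)"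
  by (simp add: facet_form_def sum_distrib_left algebra_simps)

lemma facet_normal_facet: "facet_normal P F n h \<Longrightarrow> F facet_of P"
  unfolding facet_normal_def by blast

lemma facet_normal_primitive: "facet_normal P F n h \<Longrightarrow> primitive n"
  by (simp add: facet_normal_def)

lemma lat_pts_cone_P_iff:
  "z \<in> lat_pts (cone_P P) \<longleftrightarrow> (\<forall>F n h. facet_normal P F n h \<longrightarrow> 0 \<le> facet_form n h z)"
proof -
  have key: "- of_int k * of_int h \<le> lat n \<bullet> lat v \<longleftrightarrow> 0 \<le> facet_form n h (v, k)" for n h v k
    using of_int_facet_form[of n h v k] by linarith
  show ?thesis
    by (cases z) (simp only: lat_pts_def cone_P_def key mem_Collect_eq case_prod_conv)
qed

lemma lat_pts_int_cone_P_iff: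
  "z \<in> lat_pts (int_cone_P P) \<longleftrightarrow> (\<forall>F n h. facet_normal P F n h \<longrightarrow> 0 < facet_form n h z)"
proof -
  have key: "- of_int k * of_int h < lat n \<bullet> lat v \<longleftrightarrow> 0 < facet_form n h (v, k)" for n h v k
    using of_int_facet_form[of n h v k] by linarith
  show ?thesis
    by (cases z) (simp only: lat_pts_def int_cone_P_def key mem_Collect_eq case_prod_conv)
qed

lemma lat_pts_ant_cone_P_iff:
  "z \<in> lat_pts (ant_cone_P P) \<longleftrightarrow> (\<forall>F n h. facet_normal P F n h \<longrightarrow> -1 \<le> facet_form n h z)"
proof -
  have key: "- of_int k * of_int h - 1 \<le> lat n \<bullet> lat v \<longleftrightarrow> -1 \<le> facet_form n h (v, k)" for n h v k
    using of_int_facet_form[of n h v k] by linarith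
  show ?thesis
    by (cases z) (simp only: lat_pts_def ant_cone_P_def key mem_Collect_eq case_prod_conv)
qed

lemma lat_pts_int_cone_P_subset: "lat_pts (int_cone_P P) \<subseteq> lat_pts (cone_P P)"
  by (auto simp: lat_pts_int_cone_P_iff lat_pts_cone_P_iff less_imp_le)

lemma lat_pts_cone_P_0: "0 \<in> lat_pts (cone_P P)"
  by (simp add: lat_pts_cone_P_iff)

lemma lat_pts_cone_P_add:
  "z \<in> lat_pts (cone_P P) \<Longrightarrow> w \<in> lat_pts (cone_P P) \<Longrightarrow> z + w \<in> lat_pts (cone_P P)"
  by (simp add: lat_pts_cone_P_iff facet_form_add)

lemma lat_pts_cone_P_sum:
  "(\<And>i. i \<in> I \<Longrightarrow> f i \<in> lat_pts (cone_P P)) \<Longrightarrow> sum f I \<in> lat_pts (cone_P P)"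
  by (induction I rule: infinite_finite_induct) (auto intro: lat_pts_cone_P_add lat_pts_cone_P_0)

lemma lat_pts_int_add_ant_cone_P:
  "p \<in> lat_pts (int_cone_P P) \<Longrightarrow> q \<in> lat_pts (ant_cone_P P) \<Longrightarrow> p + q \<in> lat_pts (cone_P P)"
  by (fastforce simp: lat_pts_int_cone_P_iff lat_pts_ant_cone_P_iff lat_pts_cone_P_iff facet_form_add)

lemma lat_pts_ant_add_cone_P:
  "q \<in> lat_pts (ant_cone_P P) \<Longrightarrow> z \<in> lat_pts (cone_P P) \<Longrightarrow> q + z \<in> lat_pts (ant_cone_P P)"
  by (fastforce simp: lat_pts_ant_cone_P_iff lat_pts_cone_P_iff facet_form_add)

lemma facet_form_degree_1_nonneg:
  assumes "facet_normal P F n h" "lat v \<in> P"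
  shows "0 \<le> facet_form n h (v, 1)"
proof -
  have "- of_int h \<le> lat n \<bullet> lat v"
    using assms by (auto simp: facet_normal_def)
  then show ?thesis
    using of_int_facet_form[of n h v 1] by linarith
qed

lemma facet_form_degree_1_eq_0_iff:
  assumes n: "facet_normal P F n h" and v: "lat v \<in> P"
  shows "facet_form n h (v, 1) = 0 \<longleftrightarrow> lat v \<in> F"
proof -
  have "facet_form n h (v, 1) = 0 \<longleftrightarrow> real_of_int (facet_form n h (v, 1)) = 0"
    by (simp only: of_int_eq_0_iff)
  also have "\<dots> \<longleftrightarrow> lat n \<bullet> lat v = - of_int h"
    by (simp add: of_int_facet_form add_eq_0_iff2)
  also have "\<dots> \<longleftrightarrow> lat v \<in> F"
    using n v unfolding facet_normal_def by blast
  finally show ?thesis .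
qed

lemma slice_lat_iff: "v \<in> slice_lat X k \<longleftrightarrow> (v, k) \<in> lat_pts X"
  by (simp add: slice_lat_def lat_pts_def)

section \<open>Monomials of the canonical module and of its trace\<close>

lemma poly_mapping_eq_sum_single:
  "f = (\<Sum>z\<in>Poly_Mapping.keys f. Poly_Mapping.single z (Poly_Mapping.lookup f z))"
proof (rule poly_mapping_eqI)
  fix k
  show "Poly_Mapping.lookup f k =
      Poly_Mapping.lookup (\<Sum>z\<in>Poly_Mapping.keys f. Poly_Mapping.single z (Poly_Mapping.lookup f z)) k"
    by (cases "k \<in> Poly_Mapping.keys f") (auto simp: lookup_sum lookup_single when_def in_keys_iff)
qed

lemma keys_single_mult_subset:
  fixes f :: "'a::monoid_add \<Rightarrow>\<^sub>0 'b::comm_ring_1"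
  shows "Poly_Mapping.keys (Poly_Mapping.single a c * f) \<subseteq> (+) a ` Poly_Mapping.keys f"
  using keys_mult[of "Poly_Mapping.single a c" f] by (auto split: if_splits)

lemma lookup_single_1_mult:
  fixes f :: "'a::ab_group_add \<Rightarrow>\<^sub>0 'b::comm_ring_1"
  shows "Poly_Mapping.lookup (Poly_Mapping.single a 1 * f) (a + z) = Poly_Mapping.lookup f z"
proof -
  have "Poly_Mapping.single a 1 * f =
      (\<Sum>y\<in>Poly_Mapping.keys f. Poly_Mapping.single (a + y) (Poly_Mapping.lookup f y))"
    by (subst poly_mapping_eq_sum_single[of f]) (simp add: sum_distrib_left mult_single)
  also have "Poly_Mapping.lookup \<dots> (a + z) = (\<Sum>y\<in>Poly_Mapping.keys f. Poly_Mapping.lookup f y when y = z)"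
    by (simp add: lookup_sum lookup_single)
  also have "\<dots> = Poly_Mapping.lookup f z"
    by (cases "z \<in> Poly_Mapping.keys f") (auto simp: when_def in_keys_iff)
  finally show ?thesis .
qed

lemma canonical_module_iff:
  "w \<in> canonical_module T P \<longleftrightarrow> Poly_Mapping.keys w \<subseteq> lat_pts (int_cone_P P)"
  by (simp add: canonical_module_def)

lemma single_mem_canonical_module:
  "p \<in> lat_pts (int_cone_P P) \<Longrightarrow> Poly_Mapping.single p c \<in> canonical_module T P"
  by (simp add: canonical_module_iff)

lemma canonical_module_sum:
  assumes "\<And>i. i \<in> I \<Longrightarrow> w i \<in> canonical_module T P"
  shows "(\<Sum>i\<in>I. w i) \<in> canonical_module T P"
proof -
  have "Poly_Mapping.keys (\<Sum>i\<in>I. w i) \<subseteq> (\<Union>i\<in>I. Poly_Mapping.keys (w i))"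
    by (rule keys_sum)
  also have "\<dots> \<subseteq> lat_pts (int_cone_P P)"
    using assms by (auto simp: canonical_module_iff)
  finally show ?thesis
    by (simp add: canonical_module_iff)
qed

lemma hom_omega_add:
  "\<phi> \<in> hom_omega T P \<Longrightarrow> v \<in> canonical_module T P \<Longrightarrow> w \<in> canonical_module T P \<Longrightarrow>
    \<phi> (v + w) = \<phi> v + \<phi> w"
  unfolding hom_omega_def by blast

lemma hom_omega_mult:
  "\<phi> \<in> hom_omega T P \<Longrightarrow> a \<in> ehrhart_ring T P \<Longrightarrow> w \<in> canonical_module T P \<Longrightarrow>
    \<phi> (a * w) = a * \<phi> w"
  unfolding hom_omega_def by blast

lemma hom_omega_mem_ehrhart_ring:
  "\<phi> \<in> hom_omega T P \<Longrightarrow> w \<in> canonical_module T P \<Longrightarrow> \<phi> w \<in> ehrhart_ring T P"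
  unfolding hom_omega_def by blast

lemma hom_omega_sum:
  assumes \<phi>: "\<phi> \<in> hom_omega T P" and "finite I" and w: "\<And>i. i \<in> I \<Longrightarrow> w i \<in> canonical_module T P"
  shows "\<phi> (\<Sum>i\<in>I. w i) = (\<Sum>i\<in>I. \<phi> (w i))"
  using \<open>finite I\<close> w
proof (induction I rule: finite_induct)
  case empty
  have "\<phi> (0 + 0) = \<phi> 0 + \<phi> 0"
    by (rule hom_omega_add[OF \<phi>]) (simp_all add: canonical_module_iff)
  then show ?case
    by simp
next
  case (insert i I)
  then have "\<phi> (w i + (\<Sum>i\<in>I. w i)) = \<phi> (w i) + \<phi> (\<Sum>i\<in>I. w i)"
    by (intro hom_omega_add[OF \<phi>] canonical_module_sum) auto
  with insert show ?case
    by simp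
qed

lemma hom_omega_single:
  assumes \<phi>: "\<phi> \<in> hom_omega T P" and p: "p \<in> lat_pts (int_cone_P P)"
    and "Poly_Mapping.single 0 c \<in> ehrhart_ring T P"
  shows "\<phi> (Poly_Mapping.single p c) = Poly_Mapping.single 0 c * \<phi> (Poly_Mapping.single p 1)"
proof -
  have "\<phi> (Poly_Mapping.single 0 c * Poly_Mapping.single p 1) =
      Poly_Mapping.single 0 c * \<phi> (Poly_Mapping.single p 1)"
    using assms by (intro hom_omega_mult single_mem_canonical_module)
  then show ?thesis
    by (simp add: mult_single)
qed

lemma hom_omega_mem_trace_omega:
  "\<phi> \<in> hom_omega T P \<Longrightarrow> w \<in> canonical_module T P \<Longrightarrow> \<phi> w \<in> trace_omega T P"
  unfolding trace_omega_def by (rule CollectI, rule exI[of _ 1]) auto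

lemma trace_omega_add:
  assumes "f \<in> trace_omega T P" "g \<in> trace_omega T P"
  shows "f + g \<in> trace_omega T P"
proof -
  obtain M :: nat and \<phi> w where f: "f = (\<Sum>i<M. \<phi> i (w i))"
    and fw: "\<forall>i<M. \<phi> i \<in> hom_omega T P \<and> w i \<in> canonical_module T P"
    using assms(1) unfolding trace_omega_def by blast
  obtain N :: nat and \<psi> u where g: "g = (\<Sum>i<N. \<psi> i (u i))"
    and gu: "\<forall>i<N. \<psi> i \<in> hom_omega T P \<and> u i \<in> canonical_module T P"
    using assms(2) unfolding trace_omega_def by blast
  define \<rho> where "\<rho> i = (if i < M then \<phi> i else \<psi> (i - M))" for i
  define v where "v i = (if i < M then w i else u (i - M))" for i
  have "(\<Sum>i<M + N. \<rho> i (v i)) = (\<Sum>i<M. \<rho> i (v i)) + (\<Sum>i<N. \<rho> (M + i) (v (M + i)))"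
    by (induction N) (auto simp: add.assoc)
  also have "\<dots> = f + g"
    by (simp add: f g \<rho>_def v_def)
  finally have "f + g = (\<Sum>i<M + N. \<rho> i (v i))" ..
  moreover have "\<forall>i<M + N. \<rho> i \<in> hom_omega T P \<and> v i \<in> canonical_module T P"
    using fw gu by (auto simp: \<rho>_def v_def)
  ultimately show ?thesis
    unfolding trace_omega_def by blast
qed

lemma trace_omega_sum:
  "finite I \<Longrightarrow> (\<And>i. i \<in> I \<Longrightarrow> f i \<in> trace_omega T P) \<Longrightarrow> (\<Sum>i\<in>I. f i) \<in> trace_omega T P"
proof (induction I rule: finite_induct)
  case empty
  show ?case
    unfolding trace_omega_def by (rule CollectI, rule exI[of _ 0]) auto
next
  case (insert i I)
  then show ?case
    by (simp add: trace_omega_add)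
qed

section \<open>Full-dimensional lattice polytopes\<close>

context
  fixes P :: "(real^'d) set"
  assumes lp: "lattice_polytope P" and fd: "full_dimensional P"
begin

lemma polytope_P: "polytope P"
  using lp unfolding lattice_polytope_def polytope_def by blast

lemma polyhedron_P: "polyhedron P"
  using polytope_P by (rule polytope_imp_polyhedron)

lemma aff_dim_P: "aff_dim P = DIM(real^'d)"
  using fd by (simp add: full_dimensional_def)

lemma P_nonempty: "P \<noteq> {}"
  using aff_dim_P by auto

lemma facet_normal_iff_supporting:
  assumes G: "G facet_of P" and a: "a \<noteq> 0" "P \<subseteq> {x. a \<bullet> x \<le> b}" "G = P \<inter> {x. a \<bullet> x = b}"
  shows "facet_normal P G n h \<longleftrightarrow> primitive n \<and> (\<exists>t>0. lat n = (- t) *\<^sub>R a \<and> of_int h = t * b)"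
proof
  assume "facet_normal P G n h"
  then have n: "primitive n" and P_sub: "P \<subseteq> {x. (- lat n) \<bullet> x \<le> of_int h}"
    and G_sub: "G \<subseteq> {x. (- lat n) \<bullet> x = of_int h}"
    by (auto simp: facet_normal_def)
  have "- lat n \<noteq> 0"
    using primitive_nonzero[OF n] by simp
  then obtain t where t: "t > 0" "- lat n = t *\<^sub>R a" "of_int h = t * b"
    by (rule facet_supporting_halfspaces_proportional[OF aff_dim_P G a _ P_sub G_sub])
  then have "lat n = (- t) *\<^sub>R a"
    by (metis minus_minus scaleR_minus_left)
  with n t show "primitive n \<and> (\<exists>t>0. lat n = (- t) *\<^sub>R a \<and> of_int h = t * b)"
    by blast
next
  assume "primitive n \<and> (\<exists>t>0. lat n = (- t) *\<^sub>R a \<and> of_int h = t * b)"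
  then obtain t where n: "primitive n" and t: "t > 0" "lat n = (- t) *\<^sub>R a" "of_int h = t * b"
    by blast
  have "- of_int h \<le> lat n \<bullet> x \<longleftrightarrow> a \<bullet> x \<le> b" "lat n \<bullet> x = - of_int h \<longleftrightarrow> a \<bullet> x = b" for x
    using t by auto
  then show "facet_normal P G n h"
    using G a n unfolding facet_normal_def by auto
qed

text \<open>The facet is the convex hull of the lattice generators on it, so the differences of
  these generators span a proper rational subspace.\<close>
lemma facet_in_lattice_hyperplane:
  assumes G: "G facet_of P"
  obtains n c where "primitive n" "G \<subseteq> {x. lat n \<bullet> x = of_int c}"
proof -
  obtain V where V: "finite V" "P = convex hull (lat ` V)"
    using lp by (auto simp: lattice_polytope_def)
  obtain a b where a: "a \<noteq> 0" "P \<subseteq> {x. a \<bullet> x \<le> b}" "G = P \<inter> {x. a \<bullet> x = b}"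
    by (rule facet_of_polyhedron[OF polyhedron_P G])
  define W where "W = {v \<in> V. lat v \<in> G}"
  have G_hull: "G = convex hull (lat ` W)"
    unfolding W_def using V G by (simp add: face_of_lattice_hull facet_of_imp_face_of)
  then obtain v0 where v0: "v0 \<in> W"
    using G by (auto simp: facet_of_def)
  have a_W: "a \<bullet> lat v = b" if "v \<in> W" for v
    using that a(3) by (auto simp: W_def)
  have "lat ` (\<lambda>v. v - v0) ` W \<subseteq> {y. a \<bullet> y = 0}"
    using a_W v0 by (auto simp: lat_diff inner_diff_right)
  then have "span (lat ` (\<lambda>v. v - v0) ` W) \<subseteq> {y. a \<bullet> y = 0}"
    by (intro span_minimal) (auto intro: subspace_hyperplane)
  moreover have "a \<notin> {y. a \<bullet> y = 0}"
    using a(1) by simp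
  ultimately have "span (lat ` (\<lambda>v. v - v0) ` W) \<noteq> UNIV"
    by blast
  then obtain n where n: "primitive n"
    and orth: "\<And>w. w \<in> (\<lambda>v. v - v0) ` W \<Longrightarrow> lat n \<bullet> lat w = 0"
    by (rule exists_primitive_orthogonal) blast
  define c where "c = (\<Sum>i\<in>UNIV. n $ i * v0 $ i)"
  have "lat ` W \<subseteq> {x. lat n \<bullet> x = of_int c}"
  proof clarify
    fix v
    assume "v \<in> W"
    then have "lat n \<bullet> lat (v - v0) = 0"
      using orth by blast
    then show "lat n \<bullet> lat v = of_int c"
      by (simp add: c_def lat_diff inner_diff_right inner_lat)
  qed
  then have "G \<subseteq> {x. lat n \<bullet> x = of_int c}"
    unfolding G_hull by (intro hull_minimal convex_hyperplane)
  with n show ?thesis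
    by (rule that)
qed

lemma facet_normal_exists:
  assumes G: "G facet_of P"
  obtains n h where "facet_normal P G n h"
proof -
  obtain a b where a: "a \<noteq> 0" "P \<subseteq> {x. a \<bullet> x \<le> b}" "G = P \<inter> {x. a \<bullet> x = b}"
    by (rule facet_of_polyhedron[OF polyhedron_P G])
  obtain n c where n: "primitive n" and G_n: "G \<subseteq> {x. lat n \<bullet> x = of_int c}"
    by (rule facet_in_lattice_hyperplane[OF G])
  have "lat n \<noteq> 0"
    using primitive_nonzero[OF n] by simp
  have G_a: "G \<subseteq> {x. a \<bullet> x = b}"
    using a(3) by blast
  obtain \<mu> where \<mu>: "lat n = \<mu> *\<^sub>R a" "of_int c = \<mu> * b"
    by (rule facet_hyperplanes_proportional[OF aff_dim_P G a(1) G_a \<open>lat n \<noteq> 0\<close> G_n])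
  have "\<mu> \<noteq> 0"
    using \<mu>(1) \<open>lat n \<noteq> 0\<close> by auto
  then consider "\<mu> < 0" | "\<mu> > 0"
    by linarith
  then show ?thesis
  proof cases
    case 1
    then have "facet_normal P G n (- c)"
      using \<mu> n by (subst facet_normal_iff_supporting[OF G a]) (auto intro!: exI[of _ "- \<mu>"])
    then show ?thesis by (rule that)
  next
    case 2
    then have "facet_normal P G (- n) c"
      using \<mu> n by (subst facet_normal_iff_supporting[OF G a])
        (auto simp: lat_uminus primitive_uminus intro!: exI[of _ \<mu>])
    then show ?thesis by (rule that)
  qed
qed

lemma facet_normals_proportional:
  assumes n: "facet_normal P G n h" and m: "facet_normal P G m g"
  obtains t where "t > 0" "lat m = t *\<^sub>R lat n" "of_int g = t * of_int h"
proof -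
  have G: "G facet_of P" and n_supp: "P \<subseteq> {x. (- lat n) \<bullet> x \<le> of_int h}"
    "G = P \<inter> {x. (- lat n) \<bullet> x = of_int h}"
    using n by (auto simp: facet_normal_def)
  have "- lat n \<noteq> 0"
    using n primitive_nonzero by (auto simp: facet_normal_def)
  then obtain t where "t > 0" "lat m = (- t) *\<^sub>R (- lat n)" "of_int g = t * of_int h"
    using m facet_normal_iff_supporting[OF G _ n_supp] by blast
  then show ?thesis
    using that by simp
qed

lemma facet_form_pos_iff_same_facet:
  assumes "facet_normal P G n h" "facet_normal P G m g"
  shows "0 < facet_form m g z \<longleftrightarrow> 0 < facet_form n h z"
proof -
  obtain t where t: "t > 0" "lat m = t *\<^sub>R lat n" "of_int g = t * of_int h"
    using facet_normals_proportional[OF assms] .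
  then have eq: "real_of_int (facet_form m g z) = t * real_of_int (facet_form n h z)"
    by (cases z) (simp add: of_int_facet_form algebra_simps)
  have "0 < facet_form m g z \<longleftrightarrow> 0 < t * real_of_int (facet_form n h z)"
    unfolding eq[symmetric] by simp
  also have "\<dots> \<longleftrightarrow> 0 < facet_form n h z"
    using t(1) by (simp add: zero_less_mult_iff)
  finally show ?thesis .
qed

lemma mem_P_iff_facet_normals:
  "y \<in> P \<longleftrightarrow> (\<forall>F n h. facet_normal P F n h \<longrightarrow> - of_int h \<le> lat n \<bullet> y)"
proof
  show "y \<in> P \<Longrightarrow> \<forall>F n h. facet_normal P F n h \<longrightarrow> - of_int h \<le> lat n \<bullet> y"
    by (auto simp: facet_normal_def)
next
  assume y: "\<forall>F n h. facet_normal P F n h \<longrightarrow> - of_int h \<le> lat n \<bullet> y"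
  obtain H where H: "P = {x. \<forall>(a, b)\<in>H. a \<bullet> x \<le> b}"
    and facets: "\<And>a b. (a, b) \<in> H \<Longrightarrow> a \<noteq> 0 \<and> (P \<inter> {x. a \<bullet> x = b}) facet_of P"
    by (rule full_dim_polyhedron_facet_halfspaces[OF polyhedron_P aff_dim_P]) blast
  have "a \<bullet> y \<le> b" if ab: "(a, b) \<in> H" for a b
  proof -
    have G: "(P \<inter> {x. a \<bullet> x = b}) facet_of P" and "a \<noteq> 0"
      using facets[OF ab] by auto
    have P_sub: "P \<subseteq> {x. a \<bullet> x \<le> b}"
      using H ab by auto
    obtain n h where n: "facet_normal P (P \<inter> {x. a \<bullet> x = b}) n h"
      using facet_normal_exists[OF G] .
    then obtain t where "t > 0" "lat n = (- t) *\<^sub>R a" "of_int h = t * b"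
      using facet_normal_iff_supporting[OF G \<open>a \<noteq> 0\<close> P_sub refl] by blast
    moreover have "- of_int h \<le> lat n \<bullet> y"
      using y n by blast
    ultimately show ?thesis
      by (simp add: mult_le_cancel_left_pos)
  qed
  then show "y \<in> P"
    using H by auto
qed

lemma interior_P_iff_facet_normals:
  "y \<in> interior P \<longleftrightarrow> (\<forall>F n h. facet_normal P F n h \<longrightarrow> - of_int h < lat n \<bullet> y)"
proof -
  have "affine hull P = UNIV"
    using aff_dim_P aff_dim_eq_full by blast
  then have int_P: "interior P = P - \<Union>{F. F facet_of P}"
    using rel_interior_of_polyhedron[OF polyhedron_P] by (simp add: rel_interior_interior)
  have on_facet: "y \<in> F \<longleftrightarrow> y \<in> P \<and> lat n \<bullet> y = - of_int h" if "facet_normal P F n h" for F n h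
    using that by (auto simp: facet_normal_def)
  show ?thesis
  proof (intro iffI allI impI)
    fix F n h
    assume "y \<in> interior P" and n: "facet_normal P F n h"
    then have "y \<in> P" "y \<notin> F"
      using int_P by (auto simp: facet_normal_def)
    then have "- of_int h \<le> lat n \<bullet> y" "lat n \<bullet> y \<noteq> - of_int h"
      using n on_facet[OF n] by (auto simp: facet_normal_def)
    then show "- of_int h < lat n \<bullet> y"
      by linarith
  next
    assume strict: "\<forall>F n h. facet_normal P F n h \<longrightarrow> - of_int h < lat n \<bullet> y"
    then have "y \<in> P"
      unfolding mem_P_iff_facet_normals by (meson less_imp_le)
    moreover have "y \<notin> F" if F: "F facet_of P" for F
    proof -
      obtain n h where n: "facet_normal P F n h"
        using facet_normal_exists[OF F] .
      then have "- of_int h < lat n \<bullet> y"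
        using strict by blast
      then show ?thesis
        using on_facet[OF n] by auto
    qed
    ultimately show "y \<in> interior P"
      using int_P by blast
  qed
qed

lemma facet_normals_nonneg_imp_0:
  assumes "\<And>F n h. facet_normal P F n h \<Longrightarrow> 0 \<le> lat n \<bullet> x"
  shows "x = 0"
proof -
  obtain p where p: "p \<in> P"
    using P_nonempty by blast
  have "p + t *\<^sub>R x \<in> P" if "t \<ge> 0" for t
  proof -
    have "- of_int h \<le> lat n \<bullet> (p + t *\<^sub>R x)" if n: "facet_normal P F n h" for F n h
    proof -
      have "- of_int h \<le> lat n \<bullet> p"
        using p n by (auto simp: facet_normal_def)
      moreover have "0 \<le> lat n \<bullet> x"
        using assms n by blast
      then have "0 \<le> t * (lat n \<bullet> x)"
        using \<open>t \<ge> 0\<close> by simp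
      ultimately show ?thesis
        by (simp add: inner_add_right)
    qed
    then show ?thesis
      unfolding mem_P_iff_facet_normals by blast
  qed
  then show ?thesis
    by (rule bounded_ray_eq_0[OF polytope_imp_bounded[OF polytope_P]])
qed

lemma cone_P_negative_degree:
  assumes "k < 0"
  shows "(x, k) \<notin> cone_P P"
proof
  assume xk: "(x, k) \<in> cone_P P"
  define y where "y = inverse (- k) *\<^sub>R x"
  have y: "of_int h \<le> lat n \<bullet> y" if n: "facet_normal P F n h" for F n h
  proof -
    have "- k * of_int h \<le> lat n \<bullet> x"
      using xk n by (simp add: cone_P_def)
    then show ?thesis
      using assms by (simp add: y_def field_simps)
  qed
  have "p = - y" if p: "p \<in> P" for p
  proof -
    have "0 \<le> lat n \<bullet> (p + y)" if n: "facet_normal P F n h" for F n h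
    proof -
      have "- of_int h \<le> lat n \<bullet> p"
        using p n by (auto simp: facet_normal_def)
      then show ?thesis
        using y[OF n] by (simp add: inner_add_right)
    qed
    then have "p + y = 0"
      by (rule facet_normals_nonneg_imp_0)
    then show ?thesis
      by (simp add: add_eq_0_iff2)
  qed
  then have "aff_dim P \<le> aff_dim {- y}"
    by (intro aff_dim_subset) blast
  then show False
    using aff_dim_P by simp
qed

lemma cone_P_iff: "(x, k) \<in> cone_P P \<longleftrightarrow> 0 \<le> k \<and> x \<in> (\<lambda>y. k *\<^sub>R y) ` P"
proof -
  have cone: "(x, k) \<in> cone_P P \<longleftrightarrow> (\<forall>F n h. facet_normal P F n h \<longrightarrow> - k * of_int h \<le> lat n \<bullet> x)"
    by (simp add: cone_P_def)
  consider "0 < k" | "k = 0" | "k < 0"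
    by linarith
  then show ?thesis
  proof cases
    case 1
    then have "- k * of_int h \<le> lat n \<bullet> x \<longleftrightarrow> - of_int h \<le> lat n \<bullet> (inverse k *\<^sub>R x)" for n h
      by (simp add: field_simps)
    with 1 show ?thesis
      by (simp add: cone in_scaleR_image_iff mem_P_iff_facet_normals)
  next
    case 2
    show ?thesis
    proof
      assume "(x, k) \<in> cone_P P"
      then have "x = 0"
        using 2 by (intro facet_normals_nonneg_imp_0) (auto simp: cone_P_def)
      then show "0 \<le> k \<and> x \<in> (\<lambda>y. k *\<^sub>R y) ` P"
        using 2 P_nonempty by auto
    next
      assume "0 \<le> k \<and> x \<in> (\<lambda>y. k *\<^sub>R y) ` P"
      then show "(x, k) \<in> cone_P P"
        using 2 by (auto simp: cone_P_def)
    qed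
  next
    case 3
    then show ?thesis
      using cone_P_negative_degree by simp
  qed
qed

lemma int_cone_P_iff: "(x, k) \<in> int_cone_P P \<longleftrightarrow> 0 < k \<and> x \<in> interior ((\<lambda>y. k *\<^sub>R y) ` P)"
proof -
  have int: "(x, k) \<in> int_cone_P P \<longleftrightarrow> (\<forall>F n h. facet_normal P F n h \<longrightarrow> - k * of_int h < lat n \<bullet> x)"
    by (simp add: int_cone_P_def)
  show ?thesis
  proof (cases "0 < k")
    case True
    then have "- k * of_int h < lat n \<bullet> x \<longleftrightarrow> - of_int h < lat n \<bullet> (inverse k *\<^sub>R x)" for n h
      by (simp add: field_simps)
    moreover have "interior ((\<lambda>y. k *\<^sub>R y) ` P) = (\<lambda>y. k *\<^sub>R y) ` interior P"
      using True by (intro interior_injective_linear_image) (auto simp: linear_scaleR inj_on_def)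
    ultimately show ?thesis
      using True by (simp add: int in_scaleR_image_iff interior_P_iff_facet_normals)
  next
    case False
    obtain F where "F facet_of P"
      using polytope_facet_exists[OF polytope_P] aff_dim_P by auto
    then obtain n h where n: "facet_normal P F n h"
      by (rule facet_normal_exists)
    have "(x, k) \<notin> int_cone_P P"
    proof
      assume xk: "(x, k) \<in> int_cone_P P"
      then have "- k * of_int h < lat n \<bullet> x"
        using n by (simp add: int)
      moreover have "(x, k) \<in> cone_P P"
        using xk by (auto simp: int cone_P_def less_imp_le)
      then have "k = 0" "x = 0"
        using False by (auto simp: cone_P_iff)
      ultimately show False
        by simp
    qed
    with False show ?thesis
      by simp
  qed
qed

lemma lat_pts_cone_P_iff_dilate:
  "(v, k) \<in> lat_pts (cone_P P) \<longleftrightarrow> 0 \<le> k \<and> lat v \<in> (\<lambda>x. real_of_int k *\<^sub>R x) ` P"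
  by (simp add: lat_pts_def cone_P_iff)

lemma lat_pts_int_cone_P_iff_dilate:
  "(v, k) \<in> lat_pts (int_cone_P P) \<longleftrightarrow> 0 < k \<and> lat v \<in> interior ((\<lambda>x. real_of_int k *\<^sub>R x) ` P)"
  by (simp add: lat_pts_def int_cone_P_iff)

lemma lat_pts_cone_P_degree_0: "(v, 0) \<in> lat_pts (cone_P P) \<Longrightarrow> v = 0"
  by (auto simp: lat_pts_cone_P_iff_dilate)

text \<open>The witness is the sum of the points \<open>(v, 1)\<close> over the lattice generators \<open>v\<close> of \<open>P\<close>
  lying on \<open>F\<close>.\<close>
lemma exists_cone_point_only_on_facet:
  assumes n: "facet_normal P F n h"
  obtains w where "facet_form n h w = 0"
    "\<And>G m g. facet_normal P G m g \<Longrightarrow> G \<noteq> F \<Longrightarrow> 0 < facet_form m g w"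
proof -
  obtain V where V: "finite V" "P = convex hull (lat ` V)"
    using lp by (auto simp: lattice_polytope_def)
  have F: "F facet_of P"
    using n by (rule facet_normal_facet)
  define W where "W = {v \<in> V. lat v \<in> F}"
  have F_hull: "F = convex hull (lat ` W)"
    unfolding W_def using V F by (simp add: face_of_lattice_hull facet_of_imp_face_of)
  have "finite W"
    using V(1) by (simp add: W_def)
  have lat_W: "lat v \<in> P" if "v \<in> W" for v
    using that V(2) by (simp add: W_def hull_inc)
  show ?thesis
  proof
    have "facet_form n h (v, 1) = 0" if "v \<in> W" for v
      using that facet_form_degree_1_eq_0_iff[OF n lat_W[OF that]] by (simp add: W_def)
    then show "facet_form n h (\<Sum>v\<in>W. (v, 1)) = 0"
      by (simp add: facet_form_sum)
  next
    fix G m g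
    assume m: "facet_normal P G m g" and "G \<noteq> F"
    have nonneg: "0 \<le> facet_form m g (v, 1)" if "v \<in> W" for v
      using facet_form_degree_1_nonneg[OF m lat_W[OF that]] .
    show "0 < facet_form m g (\<Sum>v\<in>W. (v, 1))"
    proof (rule ccontr)
      assume "\<not> 0 < facet_form m g (\<Sum>v\<in>W. (v, 1))"
      moreover have "0 \<le> (\<Sum>v\<in>W. facet_form m g (v, 1))"
        using nonneg by (rule sum_nonneg)
      ultimately have "(\<Sum>v\<in>W. facet_form m g (v, 1)) = 0"
        by (simp add: facet_form_sum)
      moreover have "(\<Sum>v\<in>W. facet_form m g (v, 1)) = 0 \<longleftrightarrow> (\<forall>v\<in>W. facet_form m g (v, 1) = 0)"
        using \<open>finite W\<close> by (rule sum_nonneg_eq_0_iff) (rule nonneg)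
      ultimately have "lat v \<in> G" if "v \<in> W" for v
        using that facet_form_degree_1_eq_0_iff[OF m lat_W[OF that]] by blast
      then have "F \<subseteq> G"
        unfolding F_hull using facet_normal_facet[OF m]
        by (intro hull_minimal) (auto intro: face_of_imp_convex facet_of_imp_face_of)
      then have "F = G"
        by (rule facet_of_subset_eq[OF polytope_imp_convex[OF polytope_P] F facet_normal_facet[OF m]])
      with \<open>G \<noteq> F\<close> show False
        by simp
    qed
  qed
qed

text \<open>Bezout gives a lattice point of height \<open>1\<close> over \<open>F\<close>; adding a large multiple of the
  previous point pushes it inside all other facets.\<close>
lemma exists_interior_point_facet_form_1:
  assumes n: "facet_normal P F n h"
  obtains p where "p \<in> lat_pts (int_cone_P P)" "facet_form n h p = 1"
proof -
  obtain w where w_F: "facet_form n h w = 0"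
    and w_pos: "\<And>G m g. facet_normal P G m g \<Longrightarrow> G \<noteq> F \<Longrightarrow> 0 < facet_form m g w"
    by (rule exists_cone_point_only_on_facet[OF n]) blast
  obtain x0 where x0: "(\<Sum>i\<in>UNIV. n $ i * x0 $ i) = 1"
    using primitive_bezout[OF facet_normal_primitive[OF n]] .
  define p where "p N = (x0, 0) + (int N *s fst w, int N * snd w)" for N :: nat
  have p_form: "facet_form m g (p N) = facet_form m g (x0, 0) + int N * facet_form m g w" for m g N
    unfolding p_def facet_form_add facet_form_smult by simp
  have p_F: "facet_form n h (p N) = 1" for N
    using x0 w_F unfolding p_form by (simp add: facet_form_def)
  have ev: "eventually (\<lambda>N. \<forall>m g. facet_normal P G m g \<longrightarrow> 0 < facet_form m g (p N)) sequentially"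
    if G: "G facet_of P" for G
  proof -
    obtain m0 g0 where m0: "facet_normal P G m0 g0"
      using facet_normal_exists[OF G] .
    have "eventually (\<lambda>N. 0 < facet_form m0 g0 (p N)) sequentially"
    proof (cases "G = F")
      case True
      then have "0 < facet_form m0 g0 (p N)" for N
        using facet_form_pos_iff_same_facet[OF n, of m0 g0] m0 p_F by simp
      then show ?thesis
        by simp
    next
      case False
      then have "1 \<le> facet_form m0 g0 w"
        using w_pos[OF m0] by simp
      then show ?thesis
        unfolding p_form by (rule eventually_sequentially_pos_linear)
    qed
    then show ?thesis
      by (rule eventually_mono) (use facet_form_pos_iff_same_facet[OF m0] in blast)
  qed
  have "eventually (\<lambda>N. \<forall>G\<in>{G. G facet_of P}.
      \<forall>m g. facet_normal P G m g \<longrightarrow> 0 < facet_form m g (p N)) sequentially"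
    using finite_polytope_facets[OF polytope_P] by (rule eventually_ball_finite) (use ev in blast)
  then obtain N where "\<forall>G\<in>{G. G facet_of P}. \<forall>m g. facet_normal P G m g \<longrightarrow> 0 < facet_form m g (p N)"
    unfolding eventually_sequentially by blast
  then have "p N \<in> lat_pts (int_cone_P P)"
    unfolding lat_pts_int_cone_P_iff using facet_normal_facet by blast
  with p_F show ?thesis
    using that by blast
qed

lemma lat_pts_ant_cone_P_if_add_int:
  assumes "\<And>p. p \<in> lat_pts (int_cone_P P) \<Longrightarrow> q + p \<in> lat_pts (cone_P P)"
  shows "q \<in> lat_pts (ant_cone_P P)"
  unfolding lat_pts_ant_cone_P_iff
proof (intro allI impI)
  fix F n h
  assume n: "facet_normal P F n h"
  then obtain p where p: "p \<in> lat_pts (int_cone_P P)" "facet_form n h p = 1"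
    by (rule exists_interior_point_facet_form_1)
  have "q + p \<in> lat_pts (cone_P P)"
    using assms p(1) .
  then have "0 \<le> facet_form n h (q + p)"
    using n unfolding lat_pts_cone_P_iff by blast
  with p(2) show "-1 \<le> facet_form n h q"
    by (simp add: facet_form_add)
qed

lemma lat_pts_cone_P_nonzero_imp_pos:
  assumes "z \<in> lat_pts (cone_P P)" "z \<noteq> 0"
  shows "0 < snd z"
proof -
  obtain v k where z: "z = (v, k)"
    by (cases z)
  with assms have "0 \<le> k" "k \<noteq> 0"
    using lat_pts_cone_P_degree_0 by (auto simp: lat_pts_cone_P_iff_dilate zero_prod_def)
  with z show ?thesis
    by simp
qed

lemma ehrhart_ring_iff: "f \<in> ehrhart_ring T P \<longleftrightarrow> Poly_Mapping.keys f \<subseteq> lat_pts (cone_P P)"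
proof -
  have "{(v, k). 0 \<le> k \<and> lat v \<in> (\<lambda>x. real_of_int k *\<^sub>R x) ` P} = lat_pts (cone_P P)"
    by (auto simp: lat_pts_cone_P_iff_dilate)
  then show ?thesis
    by (simp add: ehrhart_ring_def)
qed

lemma single_mem_ehrhart_ring:
  "z \<in> lat_pts (cone_P P) \<Longrightarrow> Poly_Mapping.single z c \<in> ehrhart_ring T P"
  by (simp add: ehrhart_ring_iff)

lemma mult_single_mem_hom_omega:
  assumes q: "q \<in> lat_pts (ant_cone_P P)"
  shows "(\<lambda>w. Poly_Mapping.single q c * w) \<in> hom_omega T P"
  unfolding hom_omega_def
proof (intro CollectI conjI ballI)
  fix w
  assume w: "w \<in> canonical_module T P"
  have "Poly_Mapping.keys (Poly_Mapping.single q c * w) \<subseteq> (+) q ` Poly_Mapping.keys w"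
    by (rule keys_single_mult_subset)
  also have "\<dots> \<subseteq> lat_pts (cone_P P)"
  proof (rule image_subsetI)
    fix p
    assume "p \<in> Poly_Mapping.keys w"
    then have "p \<in> lat_pts (int_cone_P P)"
      using w by (auto simp: canonical_module_iff)
    then show "q + p \<in> lat_pts (cone_P P)"
      using lat_pts_int_add_ant_cone_P[OF _ q] by (simp add: add.commute)
  qed
  finally show "Poly_Mapping.single q c * w \<in> ehrhart_ring T P"
    by (simp add: ehrhart_ring_iff)
qed (simp_all add: algebra_simps)

text \<open>Comparing \<open>t\<^sup>p\<^sup>' \<phi>(t\<^sup>p) = \<phi>(t\<^sup>p t\<^sup>p\<^sup>') = t\<^sup>p \<phi>(t\<^sup>p\<^sup>')\<close> shows that every exponent of
  \<open>\<phi>(t\<^sup>p)\<close>, shifted by \<open>-p\<close>, stays in \<open>C\<^sub>P\<close> after adding any interior point.\<close>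
lemma keys_hom_omega_single_diff:
  assumes \<phi>: "\<phi> \<in> hom_omega (T :: 'k::field itself) P" and p: "p \<in> lat_pts (int_cone_P P)"
    and z: "z \<in> Poly_Mapping.keys (\<phi> (Poly_Mapping.single p (1::'k)))"
  shows "z - p \<in> lat_pts (ant_cone_P P)"
proof (rule lat_pts_ant_cone_P_if_add_int)
  fix p'
  assume p': "p' \<in> lat_pts (int_cone_P P)"
  let ?t = "\<lambda>x. Poly_Mapping.single x (1::'k)"
  have A: "?t x \<in> ehrhart_ring T P" and \<omega>: "?t x \<in> canonical_module T P"
    if "x \<in> lat_pts (int_cone_P P)" for x
    using that lat_pts_int_cone_P_subset by (auto intro: single_mem_ehrhart_ring single_mem_canonical_module)
  have "?t p' * \<phi> (?t p) = \<phi> (?t p' * ?t p)"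
    using hom_omega_mult[OF \<phi> A[OF p'] \<omega>[OF p]] by simp
  also have "\<dots> = \<phi> (?t p * ?t p')"
    by (simp add: mult.commute)
  also have "\<dots> = ?t p * \<phi> (?t p')"
    using hom_omega_mult[OF \<phi> A[OF p] \<omega>[OF p']] .
  finally have eq: "?t p' * \<phi> (?t p) = ?t p * \<phi> (?t p')" .
  have "Poly_Mapping.lookup (?t p * \<phi> (?t p')) (p + (z - p + p')) =
      Poly_Mapping.lookup (?t p' * \<phi> (?t p)) (p' + z)"
    by (simp add: eq algebra_simps)
  then have "Poly_Mapping.lookup (\<phi> (?t p')) (z - p + p') = Poly_Mapping.lookup (\<phi> (?t p)) z"
    by (simp only: lookup_single_1_mult)
  with z have "z - p + p' \<in> Poly_Mapping.keys (\<phi> (?t p'))"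
    by (simp add: in_keys_iff)
  then show "z - p + p' \<in> lat_pts (cone_P P)"
    using hom_omega_mem_ehrhart_ring[OF \<phi> \<omega>[OF p']] by (auto simp: ehrhart_ring_iff)
qed

lemma keys_hom_omega_decompose:
  assumes \<phi>: "\<phi> \<in> hom_omega (T :: 'k::field itself) P" and w: "w \<in> canonical_module T P"
    and z: "z \<in> Poly_Mapping.keys (\<phi> w)"
  shows "\<exists>p q. z = p + q \<and> p \<in> lat_pts (int_cone_P P) \<and> q \<in> lat_pts (ant_cone_P P)"
proof -
  let ?t = "\<lambda>x. Poly_Mapping.single x (1::'k)"
  have keys_w: "Poly_Mapping.keys w \<subseteq> lat_pts (int_cone_P P)"
    using w by (simp add: canonical_module_iff)
  have "\<phi> w = \<phi> (\<Sum>p\<in>Poly_Mapping.keys w. Poly_Mapping.single p (Poly_Mapping.lookup w p))"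
    by (subst poly_mapping_eq_sum_single[of w]) (rule refl)
  also have "\<dots> = (\<Sum>p\<in>Poly_Mapping.keys w. \<phi> (Poly_Mapping.single p (Poly_Mapping.lookup w p)))"
    using keys_w by (intro hom_omega_sum[OF \<phi>] single_mem_canonical_module) auto
  also have "\<dots> = (\<Sum>p\<in>Poly_Mapping.keys w. Poly_Mapping.single 0 (Poly_Mapping.lookup w p) * \<phi> (?t p))"
    using keys_w lat_pts_cone_P_0
    by (intro sum.cong refl hom_omega_single[OF \<phi>] single_mem_ehrhart_ring) auto
  finally have "z \<in> Poly_Mapping.keys
      (\<Sum>p\<in>Poly_Mapping.keys w. Poly_Mapping.single 0 (Poly_Mapping.lookup w p) * \<phi> (?t p))"
    using z by (simp only:)
  then have "z \<in> (\<Union>p\<in>Poly_Mapping.keys w.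
      Poly_Mapping.keys (Poly_Mapping.single 0 (Poly_Mapping.lookup w p) * \<phi> (?t p)))"
    by (rule subsetD[OF keys_sum])
  then obtain p where p: "p \<in> Poly_Mapping.keys w"
    and z_p: "z \<in> Poly_Mapping.keys (Poly_Mapping.single 0 (Poly_Mapping.lookup w p) * \<phi> (?t p))"
    by blast
  from z_p have "z \<in> (+) 0 ` Poly_Mapping.keys (\<phi> (?t p))"
    by (rule subsetD[OF keys_single_mult_subset])
  then have "z \<in> Poly_Mapping.keys (\<phi> (?t p))"
    by simp
  moreover have p_int: "p \<in> lat_pts (int_cone_P P)"
    using p keys_w by blast
  ultimately have "z - p \<in> lat_pts (ant_cone_P P)"
    by (intro keys_hom_omega_single_diff[OF \<phi>])
  with p_int show ?thesis
    by (intro exI[of _ p] exI[of _ "z - p"]) simp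
qed

lemma keys_trace_omega_decompose:
  assumes f: "f \<in> trace_omega (T :: 'k::field itself) P" and z: "z \<in> Poly_Mapping.keys f"
  shows "\<exists>p q. z = p + q \<and> p \<in> lat_pts (int_cone_P P) \<and> q \<in> lat_pts (ant_cone_P P)"
proof -
  obtain N :: nat and \<phi> w where f_eq: "f = (\<Sum>i<N. \<phi> i (w i))"
    and \<phi>w: "\<forall>i<N. \<phi> i \<in> hom_omega T P \<and> w i \<in> canonical_module T P"
    using f unfolding trace_omega_def by blast
  have "z \<in> (\<Union>i\<in>{..<N}. Poly_Mapping.keys (\<phi> i (w i)))"
    using z unfolding f_eq by (rule subsetD[OF keys_sum])
  then obtain i where "i < N" "z \<in> Poly_Mapping.keys (\<phi> i (w i))"
    by blast
  then show ?thesis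
    using \<phi>w by (intro keys_hom_omega_decompose[of "\<phi> i" T "w i"]) auto
qed

lemma single_add_mem_trace_omega:
  assumes "p \<in> lat_pts (int_cone_P P)" "q \<in> lat_pts (ant_cone_P P)"
  shows "Poly_Mapping.single (p + q) c \<in> trace_omega T P"
proof -
  have "Poly_Mapping.single q c * Poly_Mapping.single p 1 \<in> trace_omega T P"
    using assms by (intro hom_omega_mem_trace_omega mult_single_mem_hom_omega single_mem_canonical_module)
  then show ?thesis
    by (simp add: mult_single add.commute)
qed

lemma max_ideal_subset_trace_omega:
  assumes dec: "lat_pts (cone_P P) - {0} \<subseteq>
      {p + q | p q. p \<in> lat_pts (int_cone_P P) \<and> q \<in> lat_pts (ant_cone_P P)}"
  shows "max_ideal T P \<subseteq> trace_omega T P"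
proof
  fix f
  assume "f \<in> max_ideal T P"
  then have f_A: "Poly_Mapping.keys f \<subseteq> lat_pts (cone_P P)"
    and f_deg: "\<forall>(v, k)\<in>Poly_Mapping.keys f. 0 < k"
    by (simp_all add: max_ideal_def ehrhart_ring_iff)
  have monomial: "Poly_Mapping.single z (Poly_Mapping.lookup f z) \<in> trace_omega T P"
    if z: "z \<in> Poly_Mapping.keys f" for z
  proof -
    have "z \<noteq> 0"
      using f_deg z by (cases z) (auto simp: zero_prod_def)
    then have "z \<in> lat_pts (cone_P P) - {0}"
      using f_A z by blast
    then obtain p q where "z = p + q" "p \<in> lat_pts (int_cone_P P)" "q \<in> lat_pts (ant_cone_P P)"
      using dec by blast
    then show ?thesis
      by (simp add: single_add_mem_trace_omega)
  qed
  have "(\<Sum>z\<in>Poly_Mapping.keys f. Poly_Mapping.single z (Poly_Mapping.lookup f z)) \<in> trace_omega T P"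
    by (rule trace_omega_sum[OF finite_keys monomial])
  then show "f \<in> trace_omega T P"
    by (simp only: poly_mapping_eq_sum_single[of f, symmetric])
qed

theorem nearly_gorenstein_iff_decompose:
  "nearly_gorenstein (T :: 'k::field itself) P \<longleftrightarrow>
    lat_pts (cone_P P) - {0} \<subseteq>
      {p + q | p q. p \<in> lat_pts (int_cone_P P) \<and> q \<in> lat_pts (ant_cone_P P)}"
proof
  assume ng: "nearly_gorenstein T P"
  show "lat_pts (cone_P P) - {0} \<subseteq>
      {p + q | p q. p \<in> lat_pts (int_cone_P P) \<and> q \<in> lat_pts (ant_cone_P P)}"
  proof
    fix z
    assume z: "z \<in> lat_pts (cone_P P) - {0}"
    then have "0 < snd z" "Poly_Mapping.single z (1::'k) \<in> ehrhart_ring T P"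
      by (auto intro: lat_pts_cone_P_nonzero_imp_pos single_mem_ehrhart_ring)
    then have "Poly_Mapping.single z (1::'k) \<in> max_ideal T P"
      by (cases z) (simp add: max_ideal_def)
    then have "Poly_Mapping.single z (1::'k) \<in> trace_omega T P"
      using ng unfolding nearly_gorenstein_def by blast
    moreover have "z \<in> Poly_Mapping.keys (Poly_Mapping.single z (1::'k))"
      by simp
    ultimately show "z \<in> {p + q | p q. p \<in> lat_pts (int_cone_P P) \<and> q \<in> lat_pts (ant_cone_P P)}"
      using keys_trace_omega_decompose by blast
  qed
next
  assume "lat_pts (cone_P P) - {0} \<subseteq>
      {p + q | p q. p \<in> lat_pts (int_cone_P P) \<and> q \<in> lat_pts (ant_cone_P P)}"
  then show "nearly_gorenstein T P"
    unfolding nearly_gorenstein_def by (rule max_ideal_subset_trace_omega)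
qed

lemma lat_pts_cone_P_degree_1: "(v, 1) \<in> lat_pts (cone_P P) \<longleftrightarrow> lat v \<in> P"
  by (simp add: lat_pts_cone_P_iff_dilate)

lemma codegree_eq: "codegree P = (LEAST k. \<exists>v. (v, int k) \<in> lat_pts (int_cone_P P))"
proof -
  have "(1 \<le> k \<and> (\<exists>v. lat v \<in> interior ((\<lambda>x. real k *\<^sub>R x) ` P))) \<longleftrightarrow>
      (\<exists>v. (v, int k) \<in> lat_pts (int_cone_P P))" for k :: nat
    by (auto simp: lat_pts_int_cone_P_iff_dilate)
  then show ?thesis
    by (simp add: codegree_def)
qed

lemma codegree_le:
  assumes "(x, k) \<in> lat_pts (int_cone_P P)"
  shows "int (codegree P) \<le> k"
proof -
  have "0 < k"
    using assms by (simp add: lat_pts_int_cone_P_iff_dilate)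
  then have "\<exists>v. (v, int (nat k)) \<in> lat_pts (int_cone_P P)"
    using assms by auto
  then have "codegree P \<le> nat k"
    unfolding codegree_eq by (rule Least_le)
  with \<open>0 < k\<close> show ?thesis
    by linarith
qed

lemma codegree_attained:
  assumes "(x, k) \<in> lat_pts (int_cone_P P)"
  obtains z where "(z, int (codegree P)) \<in> lat_pts (int_cone_P P)"
proof -
  have "0 < k"
    using assms by (simp add: lat_pts_int_cone_P_iff_dilate)
  then have "\<exists>v. (v, int (nat k)) \<in> lat_pts (int_cone_P P)"
    using assms by auto
  then have "\<exists>v. (v, int (codegree P)) \<in> lat_pts (int_cone_P P)"
    unfolding codegree_eq by (rule LeastI)
  with that show ?thesis
    by blast
qed

text \<open>The interior part of a decomposition of a degree-one point has degree \<open>k\<close> with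
  \<open>a \<le> k \<le> a + 1\<close>, \<open>a\<close> the codegree. If \<open>k = a + 1\<close>, take any interior point \<open>(z, a)\<close>:
  then \<open>(z, a) + (y, -a)\<close> lies in \<open>C\<^sub>P\<close> in degree \<open>0\<close>, so \<open>y = -z\<close>, and
  \<open>(x + y, 1) = (z, a) + ((x + y, 1) + (y, -a))\<close> is a decomposition in degree \<open>a\<close>.\<close>
lemma degree_1_decompose_at_codegree:
  assumes p: "(x, k) \<in> lat_pts (int_cone_P P)" and q: "(y, 1 - k) \<in> lat_pts (ant_cone_P P)"
  obtains u w where "x + y = u + w" "(u, int (codegree P)) \<in> lat_pts (int_cone_P P)"
    "(w, 1 - int (codegree P)) \<in> lat_pts (ant_cone_P P)"
proof -
  define a where "a = int (codegree P)"
  have "a \<le> k"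
    using codegree_le[OF p] by (simp add: a_def)
  obtain z where z: "(z, a) \<in> lat_pts (int_cone_P P)"
    using codegree_attained[OF p] by (auto simp: a_def)
  have "(z, a) + (y, 1 - k) \<in> lat_pts (cone_P P)"
    by (rule lat_pts_int_add_ant_cone_P[OF z q])
  then have za_y: "(z + y, a + 1 - k) \<in> lat_pts (cone_P P)"
    by (simp add: algebra_simps)
  then have "0 \<le> a + 1 - k"
    by (simp add: lat_pts_cone_P_iff_dilate)
  with \<open>a \<le> k\<close> consider "k = a" | "k = a + 1"
    by linarith
  then show ?thesis
  proof cases
    case 1
    with p q show ?thesis
      by (intro that[of x y]) (simp_all add: a_def)
  next
    case 2
    with za_y have "z + y = 0"
      by (intro lat_pts_cone_P_degree_0) simp
    then have "(y, 1 - k) + (x + y, 1) = (x + y - z, 1 - a)"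
      using 2 by (simp add: add_eq_0_iff)
    moreover have "(x + y, 1) \<in> lat_pts (cone_P P)"
      using lat_pts_int_add_ant_cone_P[OF p q] by simp
    then have "(y, 1 - k) + (x + y, 1) \<in> lat_pts (ant_cone_P P)"
      by (rule lat_pts_ant_add_cone_P[OF q])
    ultimately have "(x + y - z, 1 - a) \<in> lat_pts (ant_cone_P P)"
      by simp
    with z show ?thesis
      by (intro that[of z "x + y - z"]) (simp_all add: a_def)
  qed
qed

theorem decompose_imp_degree_1_decompose:
  assumes dec: "lat_pts (cone_P P) - {0} \<subseteq>
      {p + q | p q. p \<in> lat_pts (int_cone_P P) \<and> q \<in> lat_pts (ant_cone_P P)}"
  shows "{v. lat v \<in> P} =
      {u + w | u w. u \<in> slice_lat (int_cone_P P) (int (codegree P)) \<and>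
                    w \<in> slice_lat (ant_cone_P P) (1 - int (codegree P))}"
proof (intro set_eqI iffI)
  fix v
  assume "v \<in> {v. lat v \<in> P}"
  then have "(v, 1) \<in> lat_pts (cone_P P) - {0}"
    by (simp add: lat_pts_cone_P_degree_1 zero_prod_def)
  then obtain p q where pq: "(v, 1) = p + q"
    and p: "p \<in> lat_pts (int_cone_P P)" and q: "q \<in> lat_pts (ant_cone_P P)"
    using dec by blast
  obtain x k y l where "p = (x, k)" "q = (y, l)"
    by (cases p, cases q)
  with pq p q have v: "v = x + y" and l: "l = 1 - k"
    and p': "(x, k) \<in> lat_pts (int_cone_P P)" and q': "(y, l) \<in> lat_pts (ant_cone_P P)"
    by auto
  from p' q'[unfolded l] obtain u w where "x + y = u + w"
    "(u, int (codegree P)) \<in> lat_pts (int_cone_P P)" "(w, 1 - int (codegree P)) \<in> lat_pts (ant_cone_P P)"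
    by (rule degree_1_decompose_at_codegree)
  with v show "v \<in> {u + w | u w. u \<in> slice_lat (int_cone_P P) (int (codegree P)) \<and>
      w \<in> slice_lat (ant_cone_P P) (1 - int (codegree P))}"
    unfolding slice_lat_iff by blast
next
  fix v
  assume "v \<in> {u + w | u w. u \<in> slice_lat (int_cone_P P) (int (codegree P)) \<and>
      w \<in> slice_lat (ant_cone_P P) (1 - int (codegree P))}"
  then obtain u w where v: "v = u + w" and u: "(u, int (codegree P)) \<in> lat_pts (int_cone_P P)"
    and w: "(w, 1 - int (codegree P)) \<in> lat_pts (ant_cone_P P)"
    by (auto simp: slice_lat_iff)
  have "(u, int (codegree P)) + (w, 1 - int (codegree P)) \<in> lat_pts (cone_P P)"
    by (rule lat_pts_int_add_ant_cone_P[OF u w])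
  then show "v \<in> {v. lat v \<in> P}"
    by (simp add: v lat_pts_cone_P_degree_1)
qed

text \<open>Under IDP a point of degree \<open>k \<ge> 1\<close> is a sum of \<open>k\<close> points of degree \<open>1\<close>; decomposing
  one of them and adding the others to the antecanonical part gives the decomposition.\<close>
theorem IDP_degree_1_decompose_imp_decompose:
  assumes idp: "IDP P"
    and dec1: "{v. lat v \<in> P} =
      {u + w | u w. u \<in> slice_lat (int_cone_P P) (int (codegree P)) \<and>
                    w \<in> slice_lat (ant_cone_P P) (1 - int (codegree P))}"
  shows "lat_pts (cone_P P) - {0} \<subseteq>
      {p + q | p q. p \<in> lat_pts (int_cone_P P) \<and> q \<in> lat_pts (ant_cone_P P)}"
proof
  fix z
  assume z: "z \<in> lat_pts (cone_P P) - {0}"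
  obtain x k where zx: "z = (x, k)"
    by (cases z)
  have "0 < k"
    using lat_pts_cone_P_nonzero_imp_pos[of z] z zx by simp
  define K where "K = nat k"
  have "1 \<le> K" "real K = real_of_int k"
    using \<open>0 < k\<close> by (simp_all add: K_def)
  moreover have "lat x \<in> (\<lambda>y. real_of_int k *\<^sub>R y) ` P"
    using z zx by (simp add: lat_pts_cone_P_iff_dilate)
  ultimately have "lat x \<in> (\<lambda>y. real K *\<^sub>R y) ` P"
    by simp
  then obtain u where u: "\<forall>i<K. lat (u i) \<in> P" and x: "x = (\<Sum>i<K. u i)"
    using idp \<open>1 \<le> K\<close> unfolding IDP_def by blast
  have "u 0 \<in> {v. lat v \<in> P}"
    using u \<open>1 \<le> K\<close> by simp
  then obtain s t where u0: "u 0 = s + t" and s: "(s, int (codegree P)) \<in> lat_pts (int_cone_P P)"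
    and t: "(t, 1 - int (codegree P)) \<in> lat_pts (ant_cone_P P)"
    unfolding dec1 by (auto simp: slice_lat_iff)
  define r where "r = (\<Sum>i\<in>{1..<K}. (u i, 1 :: int))"
  have "r \<in> lat_pts (cone_P P)"
    unfolding r_def using u by (intro lat_pts_cone_P_sum) (simp add: lat_pts_cone_P_degree_1)
  then have ant: "(t, 1 - int (codegree P)) + r \<in> lat_pts (ant_cone_P P)"
    by (rule lat_pts_ant_add_cone_P[OF t])
  have "{..<K} = insert 0 {1..<K}"
    using \<open>1 \<le> K\<close> by auto
  then have "(\<Sum>i<K. (u i, 1 :: int)) = (u 0, 1) + r"
    by (simp add: r_def)
  moreover have "(\<Sum>i<K. (u i, 1 :: int)) = z"
    using \<open>0 < k\<close> by (simp add: zx x K_def prod_eq_iff fst_sum snd_sum)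
  ultimately have "z = (u 0, 1) + r"
    by simp
  then have "z = (s, int (codegree P)) + ((t, 1 - int (codegree P)) + r)"
    by (simp add: u0 algebra_simps)
  with s ant show "z \<in> {p + q | p q. p \<in> lat_pts (int_cone_P P) \<and> q \<in> lat_pts (ant_cone_P P)}"
    by blast
qed

end

theorem proposition3p2:
  fixes P :: "(real^'d) set"
  assumes kinf: "infinite (UNIV :: 'k::field set)"
    and lp: "lattice_polytope P" and fd: "full_dimensional P"
  shows "(nearly_gorenstein TYPE('k) P \<longleftrightarrow>
           lat_pts (cone_P P) - {0} \<subseteq>
             {p + q | p q. p \<in> lat_pts (int_cone_P P) \<and> q \<in> lat_pts (ant_cone_P P)})
    \<and> (nearly_gorenstein TYPE('k) P \<longrightarrow>
           {v. lat v \<in> P} =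
             {u + w | u w. u \<in> slice_lat (int_cone_P P) (int (codegree P)) \<and>
                           w \<in> slice_lat (ant_cone_P P) (1 - int (codegree P))})
    \<and> (IDP P \<and>
           {v. lat v \<in> P} =
             {u + w | u w. u \<in> slice_lat (int_cone_P P) (int (codegree P)) \<and>
                           w \<in> slice_lat (ant_cone_P P) (1 - int (codegree P))} \<longrightarrow>
           nearly_gorenstein TYPE('k) P)"
  using nearly_gorenstein_iff_decompose[OF lp fd, of "TYPE('k)"]
    decompose_imp_degree_1_decompose[OF lp fd] IDP_degree_1_decompose_imp_decompose[OF lp fd]
  by argo

end
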